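(* Let $G$ be a simple connected graph with $n$ vertices and $m$ edges, let $k\ge1$ be an integer, let $S_k(G)$ be the $k$-parallel subdivision graph of $G$, and let $N$ denote the set of the $km$ new (subdivision) vertices of $S_k(G)$, so $V(S_k(G))=V(G)\cup N$. Let $i\neq j$ be vertices of $S_k(G)$. Then: (1) If $i,j\in V(G)$, then $E_iT_j(S_k(G))=4E_iT_j(G)$. (2) If $i\in N$, $j\in V(G)$ and the two neighbours of $i$ in $S_k(G)$ are $s,t$, then $E_iT_j(S_k(G))=1+2E_sT_j(G)+2E_tT_j(G)$ and $E_jT_i(S_k(G))=2km-1+2\big[E_jT_s(G)+E_jT_t(G)\big]-\big[E_tT_s(G)+E_sT_t(G)\big]$. (3) If $i,j\in N$, the neighbours of $i$ in $S_k(G)$ are $s,t$ and the neighbours of $j$ are $p,q$, then $E_iT_j(S_k(G))=2km+E_sT_p(G)+E_sT_q(G)+E_tT_p(G)+E_tT_q(G)-E_qT_p(G)-E_pT_q(G)$ and $E_jT_i(S_k(G))=2km+E_pT_s(G)+E_qT_s(G)+E_pT_t(G)+E_qT_t(G)-E_tT_s(G)-E_sT_t(G)$.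
   Context: The $k$-parallel subdivision graph $S_k(G)$ is obtained from $G$ by replacing each edge $uv$ of $G$ by $k$ internally disjoint paths $u-w-v$ of length $2$ (each with its own new middle vertex $w$); the two neighbours of a new vertex $w$ are the endpoints $u,v$ of the corresponding edge of $G$. For a connected graph $H$ and vertices $a,b$, $E_aT_b(H)$ denotes the expected hitting time: the expected number of steps the simple random walk on $H$ started at $a$ needs to first reach $b$ (with $E_aT_a(H)=0$). *)

theory Defs
  imports Complex_Main
begin

definition simple_graph :: "'a set \<Rightarrow> ('a \<Rightarrow> 'a \<Rightarrow> bool) \<Rightarrow> bool" where
  "simple_graph V E \<longleftrightarrow> finite V \<and>
     (\<forall>u v. E u v \<longrightarrow> u \<in> V \<and> v \<in> V \<and> u \<noteq> v \<and> E v u)"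

definition connected_graph :: "'a set \<Rightarrow> ('a \<Rightarrow> 'a \<Rightarrow> bool) \<Rightarrow> bool" where
  "connected_graph V E \<longleftrightarrow> V \<noteq> {} \<and> (\<forall>u\<in>V. \<forall>v\<in>V. E\<^sup>*\<^sup>* u v)"

definition edges :: "'a set \<Rightarrow> ('a \<Rightarrow> 'a \<Rightarrow> bool) \<Rightarrow> 'a set set" where
  "edges V E = {{u, v} | u v. u \<in> V \<and> v \<in> V \<and> E u v}"

definition degree :: "'a set \<Rightarrow> ('a \<Rightarrow> 'a \<Rightarrow> bool) \<Rightarrow> 'a \<Rightarrow> nat" where
  "degree V E u = card {v \<in> V. E u v}"

definition trans_prob :: "'a set \<Rightarrow> ('a \<Rightarrow> 'a \<Rightarrow> bool) \<Rightarrow> 'a \<Rightarrow> 'a \<Rightarrow> real" where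
  "trans_prob V E u v = (if E u v then 1 / real (degree V E u) else 0)"

fun first_hit :: "'a set \<Rightarrow> ('a \<Rightarrow> 'a \<Rightarrow> bool) \<Rightarrow> 'a \<Rightarrow> nat \<Rightarrow> 'a \<Rightarrow> real" where
  "first_hit V E b 0 x = (if x = b then 1 else 0)"
| "first_hit V E b (Suc n) x =
     (if x = b then 0 else (\<Sum>y\<in>V. trans_prob V E x y * first_hit V E b n y))"

definition hitting_time :: "'a set \<Rightarrow> ('a \<Rightarrow> 'a \<Rightarrow> bool) \<Rightarrow> 'a \<Rightarrow> 'a \<Rightarrow> real" where
  "hitting_time V E a b = (\<Sum>n. real n * first_hit V E b n a)"

text \<open>k-parallel subdivision graph S_k(G): old vertices Inl u, new vertices Inr (e, c)
  for each edge e of G and copy index c < k; Inr (e,c) is adjacent exactly to the two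
  endpoints of e.\<close>
definition subdiv_new :: "'a set \<Rightarrow> ('a \<Rightarrow> 'a \<Rightarrow> bool) \<Rightarrow> nat \<Rightarrow> ('a + 'a set \<times> nat) set" where
  "subdiv_new V E k = {Inr (e, c) | e c. e \<in> edges V E \<and> c < k}"

definition subdiv_V :: "'a set \<Rightarrow> ('a \<Rightarrow> 'a \<Rightarrow> bool) \<Rightarrow> nat \<Rightarrow> ('a + 'a set \<times> nat) set" where
  "subdiv_V V E k = Inl ` V \<union> subdiv_new V E k"

definition subdiv_E :: "'a set \<Rightarrow> ('a \<Rightarrow> 'a \<Rightarrow> bool) \<Rightarrow> nat \<Rightarrow>
    ('a + 'a set \<times> nat) \<Rightarrow> ('a + 'a set \<times> nat) \<Rightarrow> bool" where
  "subdiv_E V E k x y =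
     (\<exists>u e c. e \<in> edges V E \<and> c < k \<and> u \<in> e \<and>
        ((x = Inl u \<and> y = Inr (e, c)) \<or> (x = Inr (e, c) \<and> y = Inl u)))"

end

theory Submission
  imports Defs
begin

text \<open>Hitting times to a fixed target \<open>b\<close> are the unique solution \<open>g\<close> of \<open>g b = 0\<close> and
  \<open>g x = 1 + (mean of g over the neighbours of x)\<close> for \<open>x \<noteq> b\<close>: the hitting time satisfies
  these first-step equations because the walk meets \<open>b\<close> geometrically fast, and the difference
  of two solutions is harmonic off \<open>b\<close> and vanishes at \<open>b\<close>, hence is zero by the maximum
  principle. Each formula for \<open>S\<^sub>k(G)\<close> is therefore proved by checking the first-step
  equations for an explicit candidate built from hitting times in \<open>G\<close>. For an old vertex
  \<open>j\<close> as target the candidate is \<open>4 E\<^sub>xT\<^sub>j(G)\<close> on old vertices; for a subdivision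
  vertex on the edge \<open>st\<close> it is an affine function of \<open>E\<^sub>xT\<^sub>s(G) + E\<^sub>xT\<^sub>t(G)\<close>, and the
  check at \<open>s\<close> and \<open>t\<close> uses the return-time identity: the sum of \<open>E\<^sub>yT\<^sub>b(G)\<close> over
  the neighbours \<open>y\<close> of \<open>b\<close> is \<open>2m - deg b\<close>.\<close>

section \<open>Hitting times of random walks\<close>

lemma trans_prob_nonneg: "0 \<le> trans_prob V E x y"
  by (simp add: trans_prob_def)

lemma sum_trans_prob_eq_avg:
  assumes "finite V"
  shows "(\<Sum>y\<in>V. trans_prob V E x y * g y) = (\<Sum>y\<in>{y\<in>V. E x y}. g y) / real (degree V E x)"
proof -
  have "(\<Sum>y\<in>V. trans_prob V E x y * g y) = (\<Sum>y\<in>V. if E x y then g y / real (degree V E x) else 0)"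
    by (rule sum.cong) (auto simp: trans_prob_def)
  also have "\<dots> = (\<Sum>y\<in>{y\<in>V. E x y}. g y / real (degree V E x))"
    using assms by (simp add: sum.inter_filter)
  also have "\<dots> = (\<Sum>y\<in>{y\<in>V. E x y}. g y) / real (degree V E x)"
    by (simp add: sum_divide_distrib)
  finally show ?thesis .
qed

lemma sum_trans_prob_le_1: "finite V \<Longrightarrow> (\<Sum>y\<in>V. trans_prob V E x y) \<le> 1"
  using sum_trans_prob_eq_avg[of V E x "\<lambda>_. 1"] by (simp add: degree_def)

lemma degree_pos_if_edge: "finite V \<Longrightarrow> E x y \<Longrightarrow> y \<in> V \<Longrightarrow> 0 < degree V E x"
  by (auto simp: degree_def card_gt_0_iff)

lemma sum_trans_prob_eq_1:
  assumes "finite V" "E x y" "y \<in> V"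
  shows "(\<Sum>y\<in>V. trans_prob V E x y) = 1"
  using sum_trans_prob_eq_avg[OF assms(1), of E x "\<lambda>_. 1"] degree_pos_if_edge[of V E x y, OF assms]
  by (simp add: degree_def)

lemma trans_prob_pos: "finite V \<Longrightarrow> E x y \<Longrightarrow> y \<in> V \<Longrightarrow> 0 < trans_prob V E x y"
  using degree_pos_if_edge by (simp add: trans_prob_def)

lemma power_div_le_root_power:
  fixes \<rho> :: real
  assumes "0 < \<rho>" "\<rho> < 1" "0 < L"
  shows "\<rho> ^ (n div L) * \<rho> \<le> root L \<rho> ^ n"
proof -
  define r where "r = root L \<rho>"
  have r: "0 < r" "r < 1" "r ^ L = \<rho>"
    using assms by (auto simp: r_def real_root_pow_pos2)
  have "r ^ n = \<rho> ^ (n div L) * r ^ (n mod L)"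
    by (metis r(3) power_add power_mult mult_div_mod_eq)
  moreover have "\<rho> \<le> r ^ (n mod L)"
    using r assms(3) power_decreasing[of "n mod L" L r] by simp
  ultimately show ?thesis
    using assms by (simp add: r_def mult_left_mono)
qed

fun survival :: "'a set \<Rightarrow> ('a \<Rightarrow> 'a \<Rightarrow> bool) \<Rightarrow> 'a \<Rightarrow> nat \<Rightarrow> 'a \<Rightarrow> real" where
  "survival V E b 0 x = (if x = b then 0 else 1)"
| "survival V E b (Suc n) x =
     (if x = b then 0 else (\<Sum>y\<in>V. trans_prob V E x y * survival V E b n y))"

locale walk_to_target =
  fixes V :: "'a set" and E :: "'a \<Rightarrow> 'a \<Rightarrow> bool" and b :: 'a
  assumes finite_V: "finite V"
    and edge_in_V: "\<And>x y. E x y \<Longrightarrow> x \<in> V \<and> y \<in> V"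
    and target_in_V: "b \<in> V"
    and reaches_target: "\<And>x. x \<in> V \<Longrightarrow> E\<^sup>*\<^sup>* x b"
begin

abbreviation "P \<equiv> trans_prob V E"
abbreviation "f \<equiv> first_hit V E b"
abbreviation "u \<equiv> survival V E b"

lemma exists_successor: "x \<in> V \<Longrightarrow> x \<noteq> b \<Longrightarrow> \<exists>y. E x y"
  using reaches_target by (metis converse_rtranclpE)

lemma sum_trans_prob_off_target: "x \<in> V \<Longrightarrow> x \<noteq> b \<Longrightarrow> (\<Sum>y\<in>V. P x y) = 1"
  using exists_successor edge_in_V finite_V sum_trans_prob_eq_1 by metis

lemma first_hit_nonneg: "0 \<le> f n x"
  by (induction n arbitrary: x) (auto intro!: sum_nonneg simp: trans_prob_nonneg)

lemma survival_bounds: "0 \<le> u n x \<and> u n x \<le> 1"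
proof (induction n arbitrary: x)
  case (Suc n)
  have "(\<Sum>y\<in>V. P x y * u n y) \<le> (\<Sum>y\<in>V. P x y)"
    by (rule sum_mono) (metis Suc.IH trans_prob_nonneg mult_left_le)
  also have "\<dots> \<le> 1" by (rule sum_trans_prob_le_1[OF finite_V])
  finally show ?case using Suc by (auto intro!: sum_nonneg simp: trans_prob_nonneg)
qed simp

lemma first_hit_Suc_eq: "x \<in> V \<Longrightarrow> f (Suc n) x = u n x - u (Suc n) x"
proof (induction n arbitrary: x)
  case 0
  show ?case
  proof (cases "x = b")
    case False
    have "(\<Sum>y\<in>V. P x y * f 0 y) + (\<Sum>y\<in>V. P x y * u 0 y) = (\<Sum>y\<in>V. P x y)"
      unfolding sum.distrib[symmetric] by (rule sum.cong) auto
    then show ?thesis using False sum_trans_prob_off_target[OF 0 False] by simp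
  qed simp
next
  case (Suc n)
  show ?case
  proof (cases "x = b")
    case False
    have "f (Suc (Suc n)) x = (\<Sum>y\<in>V. P x y * (u n y - u (Suc n) y))"
      using False Suc by (simp del: survival.simps)
    also have "\<dots> = u (Suc n) x - u (Suc (Suc n)) x"
      using False by (simp add: right_diff_distrib sum_subtractf del: first_hit.simps)
    finally show ?thesis .
  qed simp
qed

lemma survival_Suc_le: "x \<in> V \<Longrightarrow> u (Suc n) x \<le> u n x"
  using first_hit_Suc_eq[of x n] first_hit_nonneg[of "Suc n" x] by simp

lemma survival_antimono: "x \<in> V \<Longrightarrow> m \<le> n \<Longrightarrow> u n x \<le> u m x"
  using lift_Suc_antimono_le[of "\<lambda>n. u n x"] survival_Suc_le by blast

lemma survival_target: "u n b = 0"
  by (cases n) auto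

lemma survival_add_le:
  assumes "0 \<le> c" "\<forall>y\<in>V. u n y \<le> c" "x \<in> V"
  shows "u (n + m) x \<le> c * u m x"
  using assms(3)
proof (induction m arbitrary: x)
  case 0 then show ?case using assms(2) by (auto simp: survival_target)
next
  case (Suc m)
  have "(\<Sum>y\<in>V. P x y * u (n + m) y) \<le> (\<Sum>y\<in>V. P x y * (c * u m y))"
    by (rule sum_mono) (metis Suc.IH trans_prob_nonneg mult_left_mono)
  then show ?case by (simp add: sum_distrib_left ac_simps)
qed

lemma survival_eventually_lt_1: "E\<^sup>*\<^sup>* x b \<Longrightarrow> \<exists>n. u n x < 1"
proof (induction rule: converse_rtranclp_induct)
  case base then show ?case by (intro exI[of _ 0]) simp
next
  case (step x y)
  then obtain n where n: "u n y < 1" by blast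
  show ?case
  proof (cases "x = b")
    case True then show ?thesis by (intro exI[of _ 0]) simp
  next
    case False
    have y: "y \<in> V" using edge_in_V step by blast
    have "(\<Sum>z\<in>V. P x z * u n z) < (\<Sum>z\<in>V. P x z)"
    proof (rule sum_strict_mono_ex1[OF finite_V])
      show "\<forall>z\<in>V. P x z * u n z \<le> P x z"
        by (metis survival_bounds trans_prob_nonneg mult_left_le)
      show "\<exists>z\<in>V. P x z * u n z < P x z"
        using y n trans_prob_pos[of V E x y, OF finite_V step(1) y] by (intro bexI[of _ y]) auto
    qed
    also have "\<dots> \<le> 1" by (rule sum_trans_prob_le_1[OF finite_V])
    finally show ?thesis using False by (intro exI[of _ "Suc n"]) simp
  qed
qed

lemma survival_uniformly_lt_1: "\<exists>L \<rho>. 0 < L \<and> 0 < \<rho> \<and> \<rho> < 1 \<and> (\<forall>x\<in>V. u L x \<le> \<rho>)"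
proof -
  obtain N where N: "\<forall>x\<in>V. u (N x) x < 1"
    using survival_eventually_lt_1 reaches_target by metis
  define L where "L = Suc (Max (N ` V))"
  have L: "u L x < 1" if "x \<in> V" for x
  proof -
    have "N x \<le> L" using that finite_V by (auto simp: L_def intro: le_SucI)
    then show ?thesis using survival_antimono[OF that] N that by (meson le_less_trans)
  qed
  define \<rho> where "\<rho> = max (1/2) (Max ((\<lambda>x. u L x) ` V))"
  have "Max ((\<lambda>x. u L x) ` V) < 1"
    using finite_V target_in_V L by (subst Max_less_iff) auto
  then have "0 < \<rho> \<and> \<rho> < 1" by (auto simp: \<rho>_def)
  moreover have "\<forall>x\<in>V. u L x \<le> \<rho>"
    using finite_V by (auto simp: \<rho>_def intro!: max.coboundedI2 Max_ge)
  moreover have "0 < L" by (simp add: L_def)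
  ultimately show ?thesis by blast
qed

lemma survival_geometric_bound:
  "\<exists>r C. 0 < r \<and> r < 1 \<and> (\<forall>x\<in>V. \<forall>n. u n x \<le> C * r ^ n)"
proof -
  obtain L \<rho> where L: "0 < L" "0 < \<rho>" "\<rho> < 1" "\<forall>x\<in>V. u L x \<le> \<rho>"
    using survival_uniformly_lt_1 by blast
  have multiple: "u (j * L) x \<le> \<rho> ^ j" if "x \<in> V" for j x
    using that
  proof (induction j arbitrary: x)
    case 0 then show ?case using survival_bounds by simp
  next
    case (Suc j)
    have "u (L + j * L) x \<le> \<rho> * u (j * L) x"
      using survival_add_le L Suc by auto
    also have "\<dots> \<le> \<rho> * \<rho> ^ j" using Suc L by (intro mult_left_mono) auto
    finally show ?case by simp
  qed
  have "\<forall>x\<in>V. \<forall>n. u n x \<le> (1 / \<rho>) * root L \<rho> ^ n"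
  proof (intro ballI allI)
    fix x n assume "x \<in> V"
    then have "u n x \<le> u ((n div L) * L) x"
      by (intro survival_antimono) (auto simp: div_times_less_eq_dividend)
    also have "\<dots> \<le> \<rho> ^ (n div L)" using multiple \<open>x \<in> V\<close> by blast
    also have "\<dots> \<le> (1 / \<rho>) * root L \<rho> ^ n"
      using power_div_le_root_power[of \<rho> L n] L by (simp add: field_simps)
    finally show "u n x \<le> (1 / \<rho>) * root L \<rho> ^ n" .
  qed
  moreover have "0 < root L \<rho>" "root L \<rho> < 1" using L by auto
  ultimately show ?thesis by (intro exI[of _ "root L \<rho>"] exI[of _ "1/\<rho>"]) simp
qed

lemma summable_hitting_series:
  assumes "x \<in> V"
  shows "summable (\<lambda>n. real n * f n x)"
proof -
  obtain r C where rC: "0 < r" "r < 1" "\<forall>x\<in>V. \<forall>n. u n x \<le> C * r ^ n"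
    using survival_geometric_bound by blast
  have "summable (\<lambda>n. C * (real (Suc n) * r ^ n))"
    using geometric_deriv_sums[of r] rC by (intro summable_mult) (auto simp: sums_iff)
  then have "summable (\<lambda>n. real (Suc n) * f (Suc n) x)"
  proof (rule summable_comparison_test')
    fix n :: nat
    have "f (Suc n) x \<le> u n x"
      using first_hit_Suc_eq[OF assms, of n] survival_bounds[of "Suc n" x] by simp
    also have "\<dots> \<le> C * r ^ n" using rC assms by blast
    finally have "f (Suc n) x \<le> C * r ^ n" .
    then show "norm (real (Suc n) * f (Suc n) x) \<le> C * (real (Suc n) * r ^ n)"
      using first_hit_nonneg[of "Suc n" x] by (simp add: mult_left_mono mult.left_commute)
  qed
  then show ?thesis using summable_Suc_iff[of "\<lambda>n. real n * f n x"] by simp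
qed

lemma first_hit_sums_1:
  assumes "x \<in> V"
  shows "(\<lambda>n. f n x) sums 1"
proof -
  obtain r C where rC: "0 < r" "r < 1" "\<forall>x\<in>V. \<forall>n. u n x \<le> C * r ^ n"
    using survival_geometric_bound by blast
  have partial_sums: "(\<Sum>n<Suc N. f n x) = 1 - u N x" for N
  proof (induction N)
    case (Suc N)
    have "(\<Sum>n<Suc (Suc N). f n x) = (\<Sum>n<Suc N. f n x) + f (Suc N) x"
      by (rule sum.lessThan_Suc)
    then show ?case unfolding Suc first_hit_Suc_eq[OF assms] by simp
  qed simp
  have geometric_to_0: "(\<lambda>N. C * r ^ N) \<longlonglongrightarrow> 0"
    using rC by (intro tendsto_mult_right_zero LIMSEQ_power_zero) auto
  have "(\<lambda>N. u N x) \<longlonglongrightarrow> 0"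
  proof (rule tendsto_sandwich[OF _ _ tendsto_const geometric_to_0])
    show "\<forall>\<^sub>F N in sequentially. 0 \<le> u N x"
      by (intro always_eventually allI) (simp add: survival_bounds)
    show "\<forall>\<^sub>F N in sequentially. u N x \<le> C * r ^ N"
      using rC(3) assms by (intro always_eventually allI) blast
  qed
  then have "(\<lambda>N. 1 - u N x) \<longlonglongrightarrow> 1 - 0"
    by (intro tendsto_diff tendsto_const)
  then have "(\<lambda>N. \<Sum>n<Suc N. f n x) \<longlonglongrightarrow> 1"
    unfolding partial_sums by simp
  then show ?thesis unfolding sums_def by (rule LIMSEQ_imp_Suc)
qed

lemma hitting_time_target: "hitting_time V E b b = 0"
proof -
  have "(\<lambda>n. real n * f n b) = (\<lambda>n. 0)" by (rule ext, case_tac n) auto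
  then show ?thesis by (simp add: hitting_time_def)
qed

lemma hitting_time_first_step:
  assumes "x \<in> V" "x \<noteq> b"
  shows "hitting_time V E x b = 1 + (\<Sum>y\<in>V. P x y * hitting_time V E y b)"
proof -
  let ?h = "\<lambda>y. hitting_time V E y b"
  have series: "(\<lambda>n. real n * f n y) sums ?h y" if "y \<in> V" for y
    using summable_hitting_series[OF that] by (simp add: hitting_time_def summable_sums)
  have "(\<lambda>n. real (Suc n) * f (Suc n) x) sums ?h x"
    using series[OF assms(1)] by (subst sums_Suc_iff) simp
  moreover have "(\<lambda>n. real (Suc n) * f (Suc n) x) = (\<lambda>n. \<Sum>y\<in>V. P x y * (real n * f n y + f n y))"
  proof
    fix n
    have "real (Suc n) * f (Suc n) x = real (Suc n) * (\<Sum>y\<in>V. P x y * f n y)"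
      using assms(2) by simp
    also have "\<dots> = (\<Sum>y\<in>V. P x y * (real n * f n y + f n y))"
      unfolding sum_distrib_left by (rule sum.cong) (simp_all add: algebra_simps)
    finally show "real (Suc n) * f (Suc n) x = (\<Sum>y\<in>V. P x y * (real n * f n y + f n y))" .
  qed
  moreover have "(\<lambda>n. \<Sum>y\<in>V. P x y * (real n * f n y + f n y)) sums (\<Sum>y\<in>V. P x y * (?h y + 1))"
    by (intro sums_sum sums_mult sums_add series first_hit_sums_1)
  ultimately have "?h x = (\<Sum>y\<in>V. P x y * (?h y + 1))" by (metis sums_unique2)
  also have "\<dots> = (\<Sum>y\<in>V. P x y * ?h y) + (\<Sum>y\<in>V. P x y)"
    by (simp add: algebra_simps sum.distrib)
  finally show ?thesis using sum_trans_prob_off_target[OF assms] by simp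
qed

text \<open>Maximum principle: the maximum of a function harmonic off \<open>b\<close> propagates along edges,
  hence reaches \<open>b\<close>.\<close>
lemma harmonic_nonpos:
  assumes d_target: "d b = 0"
    and harmonic: "\<And>x. x \<in> V \<Longrightarrow> x \<noteq> b \<Longrightarrow> d x = (\<Sum>y\<in>V. P x y * d y)"
    and x: "x \<in> V"
  shows "d x \<le> 0"
proof -
  define M where "M = Max (d ` V)"
  define A where "A = {x\<in>V. d x = M}"
  have le_M: "d y \<le> M" if "y \<in> V" for y
    unfolding M_def using that finite_V by (intro Max_ge) auto
  have A_closed: "y \<in> A" if "z \<in> A" "z \<noteq> b" "E z y" for z y
  proof -
    have z: "z \<in> V" "d z = M" and y: "y \<in> V" using that edge_in_V by (auto simp: A_def)
    have "(\<Sum>w\<in>V. P z w * (M - d w)) = M * (\<Sum>w\<in>V. P z w) - (\<Sum>w\<in>V. P z w * d w)"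
      by (simp add: algebra_simps sum_subtractf sum_distrib_left)
    also have "\<dots> = 0"
      using z harmonic[OF z(1) that(2)] sum_trans_prob_off_target[OF z(1) that(2)] by simp
    finally have "(\<Sum>w\<in>V. P z w * (M - d w)) = 0" .
    moreover have "0 \<le> P z w * (M - d w)" if "w \<in> V" for w
      using le_M[OF that] trans_prob_nonneg[of V E z w] by (simp add: mult_nonneg_nonneg)
    ultimately have "\<forall>w\<in>V. P z w * (M - d w) = 0"
      using sum_nonneg_eq_0_iff[of V "\<lambda>w. P z w * (M - d w)", OF finite_V] by blast
    then show ?thesis
      using y trans_prob_pos[of V E z y, OF finite_V that(3) y] by (auto simp: A_def)
  qed
  have "M \<in> d ` V" unfolding M_def using finite_V target_in_V by (intro Max_in) auto
  then obtain x0 where x0: "x0 \<in> V" "d x0 = M" by blast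
  have "b \<in> A \<or> y \<in> A" if "E\<^sup>*\<^sup>* x0 y" for y
    using that
  proof (induction rule: rtranclp_induct)
    case base then show ?case using x0 by (simp add: A_def)
  next
    case (step y z) then show ?case using A_closed by blast
  qed
  then have "b \<in> A" using reaches_target[OF x0(1)] by blast
  then have "M = 0" using d_target by (simp add: A_def)
  then show ?thesis using le_M x by simp
qed

lemma hitting_time_unique:
  assumes g_target: "g b = 0"
    and g_step: "\<And>x. x \<in> V \<Longrightarrow> x \<noteq> b \<Longrightarrow> g x = 1 + (\<Sum>y\<in>V. P x y * g y)"
    and x: "x \<in> V"
  shows "hitting_time V E x b = g x"
proof -
  let ?h = "\<lambda>y. hitting_time V E y b"
  have difference_harmonic: "\<sigma> * (?h y - g y) = (\<Sum>z\<in>V. P y z * (\<sigma> * (?h z - g z)))"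
    if "y \<in> V" "y \<noteq> b" for y and \<sigma> :: real
  proof -
    have "?h y - g y = (\<Sum>z\<in>V. P y z * (?h z - g z))"
      using hitting_time_first_step[OF that] g_step[OF that]
      by (simp add: right_diff_distrib sum_subtractf)
    then show ?thesis by (simp add: sum_distrib_left mult.left_commute)
  qed
  have "\<sigma> * (?h x - g x) \<le> 0" for \<sigma> :: real
  proof (rule harmonic_nonpos[where d = "\<lambda>y. \<sigma> * (?h y - g y)", OF _ _ x])
    show "\<sigma> * (?h b - g b) = 0" by (simp add: g_target hitting_time_target)
  qed (rule difference_harmonic)
  from this[of 1] this[of "-1"] show ?thesis by simp
qed

end

section \<open>Connected simple graphs\<close>

locale connected_simple_graph =
  fixes V :: "'a set" and E :: "'a \<Rightarrow> 'a \<Rightarrow> bool"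
  assumes simple: "simple_graph V E" and connected: "connected_graph V E"
begin

abbreviation "H \<equiv> hitting_time V E"
abbreviation "nbrs x \<equiv> {y\<in>V. E x y}"

lemma finite_V: "finite V"
  using simple by (simp add: simple_graph_def)

lemma edge_props: "E u v \<Longrightarrow> u \<in> V \<and> v \<in> V \<and> u \<noteq> v \<and> E v u"
  using simple by (simp add: simple_graph_def)

lemma edges_iff: "e \<in> edges V E \<longleftrightarrow> (\<exists>u v. e = {u, v} \<and> E u v)"
  using edge_props by (auto simp: edges_def)

lemma edge_subset: "e \<in> edges V E \<Longrightarrow> e \<subseteq> V"
  using edge_props by (auto simp: edges_iff)

lemma card_edge: "e \<in> edges V E \<Longrightarrow> card e = 2"
  using edge_props by (auto simp: edges_iff)

lemma finite_edges: "finite (edges V E)"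
  using finite_V edge_subset by (meson Pow_iff finite_Pow_iff finite_subset subsetI)

lemma degree_eq_card_incident: "x \<in> V \<Longrightarrow> degree V E x = card {e\<in>edges V E. x \<in> e}"
  unfolding degree_def
proof (rule bij_betw_same_card[of "\<lambda>y. {x, y}"], rule bij_betwI')
  fix y z assume "y \<in> nbrs x" "z \<in> nbrs x"
  then show "({x, y} = {x, z}) = (y = z)"
    using edge_props by (auto simp: doubleton_eq_iff)
next
  fix y assume "y \<in> nbrs x"
  then show "{x, y} \<in> {e\<in>edges V E. x \<in> e}" by (auto simp: edges_iff)
next
  fix e assume "e \<in> {e\<in>edges V E. x \<in> e}"
  then obtain u v where "e = {u, v}" "E u v" "x \<in> e" by (auto simp: edges_iff)
  then show "\<exists>y\<in>nbrs x. e = {x, y}"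
    using edge_props by (auto simp: insert_commute)
qed

lemma sum_degree: "(\<Sum>x\<in>V. real (degree V E x)) = 2 * real (card (edges V E))"
proof -
  have "(\<Sum>x\<in>V. degree V E x) = (\<Sum>x\<in>V. \<Sum>e\<in>edges V E. if x \<in> e then 1 else 0)"
    using finite_edges by (simp add: degree_eq_card_incident sum.inter_filter[symmetric])
  also have "\<dots> = (\<Sum>e\<in>edges V E. card e)"
    using finite_V edge_subset
    by (subst sum.swap) (simp add: sum.inter_filter[symmetric] Int_absorb1 Int_def[symmetric])
  also have "\<dots> = 2 * card (edges V E)"
    by (simp add: card_edge)
  finally show ?thesis by (metis of_nat_mult of_nat_numeral of_nat_sum)
qed

lemma sum_sum_nbrs: "(\<Sum>x\<in>V. \<Sum>y\<in>nbrs x. g y) = (\<Sum>y\<in>V. real (degree V E y) * g y)"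
proof -
  have "(\<Sum>x\<in>V. \<Sum>y\<in>nbrs x. g y) = (\<Sum>y\<in>V. \<Sum>x\<in>V. if E x y then g y else 0)"
    using finite_V by (subst sum.swap) (simp add: sum.inter_filter)
  also have "\<dots> = (\<Sum>y\<in>V. real (degree V E y) * g y)"
  proof (rule sum.cong[OF refl])
    fix y assume "y \<in> V"
    have "{x\<in>V. E x y} = nbrs y" using edge_props by blast
    then show "(\<Sum>x\<in>V. if E x y then g y else 0) = real (degree V E y) * g y"
      using finite_V by (simp add: sum.inter_filter[symmetric] degree_def)
  qed
  finally show ?thesis .
qed

lemma walk_to_target: "b \<in> V \<Longrightarrow> walk_to_target V E b"
  using finite_V edge_props connected by unfold_locales (auto simp: connected_graph_def)

lemma degree_pos: "x \<in> V \<Longrightarrow> y \<in> V \<Longrightarrow> x \<noteq> y \<Longrightarrow> 0 < degree V E x"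
  using walk_to_target.exists_successor[OF walk_to_target] edge_props finite_V
  by (metis degree_pos_if_edge)

lemma hitting_time_self: "b \<in> V \<Longrightarrow> H b b = 0"
  using walk_to_target.hitting_time_target[OF walk_to_target] .

lemma sum_nbrs_hitting_time_ne:
  assumes "x \<in> V" "b \<in> V" "x \<noteq> b"
  shows "(\<Sum>y\<in>nbrs x. H y b) = real (degree V E x) * (H x b - 1)"
proof -
  have "H x b = 1 + (\<Sum>y\<in>nbrs x. H y b) / real (degree V E x)"
    using walk_to_target.hitting_time_first_step[OF walk_to_target[OF assms(2)] assms(1,3)]
    by (simp add: sum_trans_prob_eq_avg[OF finite_V])
  then show ?thesis using degree_pos[OF assms] by (simp add: field_simps)
qed

text \<open>Equivalently, the expected return time to \<open>b\<close> is \<open>2 |E| / deg b\<close>.\<close>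
lemma sum_nbrs_hitting_time_target:
  assumes b: "b \<in> V"
  shows "(\<Sum>y\<in>nbrs b. H y b) = 2 * real (card (edges V E)) - real (degree V E b)"
proof -
  let ?D = "\<lambda>x. (\<Sum>y\<in>nbrs x. H y b) - real (degree V E x) * H x b"
  have "(\<Sum>x\<in>V. ?D x) = 0"
    using sum_sum_nbrs[of "\<lambda>y. H y b"] by (simp add: sum_subtractf)
  moreover have "(\<Sum>x\<in>V. ?D x) = ?D b + (\<Sum>x\<in>V - {b}. ?D x)"
    using finite_V b by (simp add: sum.remove)
  moreover have "(\<Sum>x\<in>V - {b}. ?D x) = (\<Sum>x\<in>V - {b}. - real (degree V E x))"
    using sum_nbrs_hitting_time_ne[OF _ b] by (intro sum.cong) (auto simp: algebra_simps)
  moreover have "(\<Sum>x\<in>V - {b}. real (degree V E x)) = 2 * real (card (edges V E)) - real (degree V E b)"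
    using sum_degree finite_V b by (simp add: sum.remove)
  ultimately show ?thesis
    using hitting_time_self[OF b] by (simp add: sum_negf)
qed

lemma sum_nbrs_hitting_time:
  assumes "x \<in> V" "b \<in> V"
  shows "(\<Sum>y\<in>nbrs x. H y b) =
    real (degree V E x) * (H x b - 1) + (if x = b then 2 * real (card (edges V E)) else 0)"
  using sum_nbrs_hitting_time_ne[OF assms] sum_nbrs_hitting_time_target[OF assms(2)]
    hitting_time_self[OF assms(2)]
  by (cases "x = b") simp_all

end

section \<open>The \<open>k\<close>-parallel subdivision\<close>

locale parallel_subdivision = connected_simple_graph +
  fixes k :: nat
  assumes k_pos: "1 \<le> k"
begin

abbreviation "SV \<equiv> subdiv_V V E k"
abbreviation "SE \<equiv> subdiv_E V E k"

lemma Inl_in_SV [simp]: "Inl x \<in> SV \<longleftrightarrow> x \<in> V"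
  by (auto simp: subdiv_V_def subdiv_new_def)

lemma Inr_in_SV [simp]: "Inr (e, c) \<in> SV \<longleftrightarrow> e \<in> edges V E \<and> c < k"
  by (auto simp: subdiv_V_def subdiv_new_def)

lemma subdiv_new_subset_SV: "subdiv_new V E k \<subseteq> SV"
  by (simp add: subdiv_V_def)

lemma SE_simps [simp]:
  "\<not> SE (Inl x) (Inl y)" "\<not> SE (Inr p) (Inr q)"
  "SE (Inl x) (Inr (e, c)) \<longleftrightarrow> e \<in> edges V E \<and> c < k \<and> x \<in> e"
  "SE (Inr (e, c)) (Inl x) \<longleftrightarrow> e \<in> edges V E \<and> c < k \<and> x \<in> e"
  by (auto simp: subdiv_E_def)

lemma finite_SV: "finite SV"
proof -
  have "subdiv_new V E k = (\<lambda>(e, c). Inr (e, c)) ` (edges V E \<times> {..<k})"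
    by (auto simp: subdiv_new_def)
  then show ?thesis using finite_V finite_edges by (simp add: subdiv_V_def)
qed

lemma SE_in_SV: "SE x y \<Longrightarrow> x \<in> SV \<and> y \<in> SV"
  by (cases x; cases y) (auto intro: edge_subset[THEN subsetD])

lemma SE_path_Inl: "E\<^sup>*\<^sup>* u v \<Longrightarrow> SE\<^sup>*\<^sup>* (Inl u) (Inl v)"
proof (induction rule: rtranclp_induct)
  case (step v w)
  then have "{v, w} \<in> edges V E" by (auto simp: edges_iff)
  then have "SE (Inl v) (Inr ({v, w}, 0))" "SE (Inr ({v, w}, 0)) (Inl w)"
    using k_pos by auto
  then show ?case using step.IH by (meson rtranclp.rtrancl_into_rtrancl)
qed simp

lemma SE_connected:
  assumes "x \<in> SV" "y \<in> SV"
  shows "SE\<^sup>*\<^sup>* x y"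
proof -
  have "\<exists>a\<in>V. SE\<^sup>*\<^sup>* x (Inl a) \<and> SE\<^sup>*\<^sup>* (Inl a) x" if "x \<in> SV" for x
  proof (cases x)
    case (Inr p)
    obtain e c where "p = (e, c)" by fastforce
    with Inr that have "x = Inr (e, c)" "e \<in> edges V E" "c < k" by auto
    moreover obtain a where "a \<in> e" using edge_subset card_edge \<open>e \<in> edges V E\<close>
      by (metis card.empty ex_in_conv zero_neq_numeral)
    ultimately show ?thesis
      using edge_subset by (intro bexI[of _ a]) (auto intro: r_into_rtranclp)
  qed (use that in auto)
  then obtain a b where "a \<in> V" "SE\<^sup>*\<^sup>* x (Inl a)" "b \<in> V" "SE\<^sup>*\<^sup>* (Inl b) y"
    using assms by meson
  moreover have "SE\<^sup>*\<^sup>* (Inl a) (Inl b)"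
    using connected \<open>a \<in> V\<close> \<open>b \<in> V\<close> SE_path_Inl by (simp add: connected_graph_def)
  ultimately show ?thesis by (meson rtranclp_trans)
qed

lemma subdiv_walk_to_target: "b \<in> SV \<Longrightarrow> walk_to_target SV SE b"
  using finite_SV SE_in_SV SE_connected by unfold_locales auto

lemma SE_nbrs_Inl:
  assumes "x \<in> V"
  shows "{w\<in>SV. SE (Inl x) w} = (\<lambda>(y, c). Inr ({x, y}, c)) ` (nbrs x \<times> {..<k})"
proof (intro equalityI subsetI)
  fix w assume "w \<in> {w\<in>SV. SE (Inl x) w}"
  then obtain e c where "w = Inr (e, c)" "e \<in> edges V E" "c < k" "x \<in> e"
    by (cases w) auto
  moreover from this obtain y where "E x y" "e = {x, y}"
    using edge_props by (auto simp: edges_iff)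
  ultimately show "w \<in> (\<lambda>(y, c). Inr ({x, y}, c)) ` (nbrs x \<times> {..<k})"
    using edge_props by auto
qed (auto simp: edges_iff; blast)

lemma inj_on_nbr_copies:
  "x \<in> V \<Longrightarrow> inj_on (\<lambda>(y, c). Inr ({x, y}, c) :: 'a + 'a set \<times> nat) (nbrs x \<times> {..<k})"
  using edge_props by (auto simp: inj_on_def doubleton_eq_iff)

lemma sum_trans_prob_subdiv_Inl:
  assumes "x \<in> V"
  shows "(\<Sum>w\<in>SV. trans_prob SV SE (Inl x) w * g w)
       = (\<Sum>y\<in>nbrs x. \<Sum>c<k. g (Inr ({x, y}, c))) / (real k * real (degree V E x))"
proof -
  have "(\<Sum>w\<in>{w\<in>SV. SE (Inl x) w}. g w) = (\<Sum>y\<in>nbrs x. \<Sum>c<k. g (Inr ({x, y}, c)))"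
    unfolding SE_nbrs_Inl[OF assms] sum.reindex[OF inj_on_nbr_copies[OF assms]]
    by (simp add: sum.cartesian_product case_prod_beta')
  moreover have "degree SV SE (Inl x) = degree V E x * k"
    unfolding degree_def SE_nbrs_Inl[OF assms] card_image[OF inj_on_nbr_copies[OF assms]]
    by (simp add: card_cartesian_product degree_def)
  ultimately show ?thesis
    unfolding sum_trans_prob_eq_avg[OF finite_SV] by (simp add: mult.commute)
qed

lemma SE_nbrs_Inr:
  assumes "e \<in> edges V E" "c < k"
  shows "{w. SE (Inr (e, c)) w} = Inl ` e"
proof (intro equalityI subsetI)
  fix w assume "w \<in> {w. SE (Inr (e, c)) w}"
  then show "w \<in> Inl ` e" by (cases w) auto
qed (use assms in auto)

lemma sum_trans_prob_subdiv_Inr: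
  assumes "e \<in> edges V E" "c < k"
  shows "(\<Sum>w\<in>SV. trans_prob SV SE (Inr (e, c)) w * g w) = (\<Sum>u\<in>e. g (Inl u)) / 2"
proof -
  have nbrs: "{w\<in>SV. SE (Inr (e, c)) w} = Inl ` e"
    using SE_nbrs_Inr[OF assms] SE_in_SV by auto
  then have "degree SV SE (Inr (e, c)) = 2"
    using card_edge[OF assms(1)] by (simp add: degree_def card_image)
  then show ?thesis
    using nbrs by (simp add: sum_trans_prob_eq_avg[OF finite_SV] sum.reindex)
qed

lemma subdiv_new_nbrs:
  assumes "i \<in> subdiv_new V E k" "{w. SE i w} = {Inl s, Inl t}"
  obtains c where "i = Inr ({s, t}, c)" "c < k" "E s t"
proof -
  obtain e c where i: "i = Inr (e, c)" "e \<in> edges V E" "c < k"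
    using assms(1) by (auto simp: subdiv_new_def)
  then have "(Inl ` e :: ('a + 'a set \<times> nat) set) = Inl ` {s, t}"
    using assms(2) SE_nbrs_Inr by simp
  then have "e = {s, t}"
    by (metis inj_Inl inj_image_eq_iff)
  moreover from this have "E s t"
    using i(2) edge_props by (auto simp: edges_iff doubleton_eq_iff)
  ultimately show ?thesis using that i by blast
qed

lemma subdiv_first_step_Inl:
  assumes "x \<in> V" "0 < degree V E x"
    and "(\<Sum>y\<in>nbrs x. \<Sum>c<k. g (Inr ({x, y}, c))) = real k * real (degree V E x) * (g (Inl x) - 1)"
  shows "g (Inl x) = 1 + (\<Sum>w\<in>SV. trans_prob SV SE (Inl x) w * g w)"
  using assms k_pos by (simp add: sum_trans_prob_subdiv_Inl)

definition old_target_formula :: "'a \<Rightarrow> 'a + 'a set \<times> nat \<Rightarrow> real" where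
  "old_target_formula j w =
     (case w of Inl x \<Rightarrow> 4 * H x j | Inr (e, _) \<Rightarrow> 1 + 2 * (\<Sum>u\<in>e. H u j))"

lemma old_target_formula_simps [simp]:
  "old_target_formula j (Inl x) = 4 * H x j"
  "old_target_formula j (Inr (e, c)) = 1 + 2 * (\<Sum>u\<in>e. H u j)"
  by (simp_all add: old_target_formula_def)

lemma hitting_time_subdiv_old_target:
  assumes j: "j \<in> V" and w: "w \<in> SV"
  shows "hitting_time SV SE w (Inl j) = old_target_formula j w"
proof (rule walk_to_target.hitting_time_unique[OF subdiv_walk_to_target _ _ w])
  show "Inl j \<in> SV" "old_target_formula j (Inl j) = 0"
    using j hitting_time_self[OF j] by simp_all
  fix x assume x: "x \<in> SV" "x \<noteq> Inl j"
  show "old_target_formula j x = 1 + (\<Sum>w\<in>SV. trans_prob SV SE x w * old_target_formula j w)"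
  proof (cases x)
    case (Inl a)
    with x have a: "a \<in> V" "a \<noteq> j" by auto
    have "(\<Sum>c<k. old_target_formula j (Inr ({a, y}, c))) = real k * (1 + 2 * H a j + 2 * H y j)"
      if "y \<in> nbrs a" for y
      using that edge_props by (simp add: algebra_simps)
    then have "(\<Sum>y\<in>nbrs a. \<Sum>c<k. old_target_formula j (Inr ({a, y}, c)))
        = real k * (real (degree V E a) * (1 + 2 * H a j) + 2 * (\<Sum>y\<in>nbrs a. H y j))"
      by (simp add: sum.distrib sum_distrib_left degree_def algebra_simps)
    also have "\<dots> = real k * real (degree V E a) * (old_target_formula j (Inl a) - 1)"
      unfolding sum_nbrs_hitting_time_ne[OF a(1) j a(2)] by (simp add: algebra_simps)
    finally show ?thesis
      using subdiv_first_step_Inl[OF a(1) degree_pos[OF a(1) j a(2)]] Inl by simp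
  next
    case (Inr p)
    with x obtain e c where "x = Inr (e, c)" "e \<in> edges V E" "c < k" by (cases p) auto
    then show ?thesis by (simp add: sum_trans_prob_subdiv_Inr sum_distrib_left[symmetric])
  qed
qed

text \<open>The constant is chosen so that \<open>1 + (edge_potential s t s + edge_potential s t t) / 2\<close>,
  the value the second clause of \<open>new_target_formula\<close> would give the target itself, is its
  expected return time \<open>2 |E(S\<^sub>k(G))| / 2 = 2 k m\<close>.\<close>
definition edge_potential :: "'a \<Rightarrow> 'a \<Rightarrow> 'a \<Rightarrow> real" where
  "edge_potential s t x =
     2 * real k * real (card (edges V E)) - 1 - (H t s + H s t) + 2 * (H x s + H x t)"

definition new_target_formula :: "'a \<Rightarrow> 'a \<Rightarrow> nat \<Rightarrow> 'a + 'a set \<times> nat \<Rightarrow> real" where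
  "new_target_formula s t c0 w =
     (case w of Inl x \<Rightarrow> edge_potential s t x
      | Inr (e, c) \<Rightarrow> if e = {s, t} \<and> c = c0 then 0 else 1 + (\<Sum>u\<in>e. edge_potential s t u) / 2)"

lemma new_target_formula_simps [simp]:
  "new_target_formula s t c0 (Inl x) = edge_potential s t x"
  "new_target_formula s t c0 (Inr (e, c)) =
     (if e = {s, t} \<and> c = c0 then 0 else 1 + (\<Sum>u\<in>e. edge_potential s t u) / 2)"
  by (simp_all add: new_target_formula_def)

lemma edge_potential_return:
  assumes "E s t"
  shows "1 + (edge_potential s t s + edge_potential s t t) / 2 = 2 * real k * real (card (edges V E))"
  using hitting_time_self edge_props[OF assms] by (simp add: edge_potential_def field_simps)

lemma sum_nbrs_edge_potential:
  assumes st: "E s t" and a: "a \<in> V"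
  shows "(\<Sum>y\<in>nbrs a. edge_potential s t y) = real (degree V E a) * (edge_potential s t a - 4)
           + (if a \<in> {s, t} then 4 * real (card (edges V E)) else 0)"
proof -
  have s: "s \<in> V" and t: "t \<in> V" and "s \<noteq> t" using edge_props[OF st] by auto
  have "(\<Sum>y\<in>nbrs a. edge_potential s t y)
      = real (degree V E a) * (2 * real k * real (card (edges V E)) - 1 - (H t s + H s t))
        + 2 * ((\<Sum>y\<in>nbrs a. H y s) + (\<Sum>y\<in>nbrs a. H y t))"
    by (simp add: edge_potential_def sum.distrib sum_distrib_left degree_def)
  then show ?thesis
    using sum_nbrs_hitting_time[OF a s] sum_nbrs_hitting_time[OF a t] \<open>s \<noteq> t\<close>
    by (auto simp: edge_potential_def algebra_simps)
qed

lemma sum_nbrs_target_edge: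
  assumes st: "E s t" and a: "a \<in> V"
  shows "(\<Sum>y\<in>nbrs a. if {a, y} = {s, t} then 1 + (edge_potential s t a + edge_potential s t y) / 2 else 0)
       = (if a \<in> {s, t} then 2 * real k * real (card (edges V E)) else 0)"
proof -
  have s: "s \<in> V" "t \<in> V" "s \<noteq> t" "E t s" using edge_props[OF st] by auto
  consider "a = s" | "a = t" | "a \<notin> {s, t}" by blast
  then show ?thesis
  proof cases
    case 1
    then have "(\<Sum>y\<in>nbrs a. if {a, y} = {s, t} then 1 + (edge_potential s t a + edge_potential s t y) / 2 else 0)
        = (\<Sum>y\<in>nbrs s. if y = t then 1 + (edge_potential s t s + edge_potential s t t) / 2 else 0)"
      using s by (intro sum.cong) (auto simp: doubleton_eq_iff)
    then show ?thesis using 1 s st finite_V edge_potential_return[OF st] by simp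
  next
    case 2
    then have "(\<Sum>y\<in>nbrs a. if {a, y} = {s, t} then 1 + (edge_potential s t a + edge_potential s t y) / 2 else 0)
        = (\<Sum>y\<in>nbrs t. if y = s then 1 + (edge_potential s t s + edge_potential s t t) / 2 else 0)"
      using s by (intro sum.cong) (auto simp: doubleton_eq_iff)
    then show ?thesis using 2 s finite_V edge_potential_return[OF st] by simp
  next
    case 3
    then show ?thesis by (auto intro!: sum.neutral)
  qed
qed

lemma new_target_formula_first_step_Inl:
  assumes st: "E s t" and c0: "c0 < k" and a: "a \<in> V"
  shows "new_target_formula s t c0 (Inl a)
    = 1 + (\<Sum>w\<in>SV. trans_prob SV SE (Inl a) w * new_target_formula s t c0 w)"
proof -
  have s: "s \<in> V" "t \<in> V" "s \<noteq> t" using edge_props[OF st] by auto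
  let ?\<phi> = "edge_potential s t"
  let ?G = "\<lambda>y. 1 + (?\<phi> a + ?\<phi> y) / 2"
  have copies: "(\<Sum>c<k. new_target_formula s t c0 (Inr ({a, y}, c)))
      = real k * ?G y - (if {a, y} = {s, t} then ?G y else 0)" if "y \<in> nbrs a" for y
  proof -
    have "a \<noteq> y" using that edge_props by auto
    then have "(\<Sum>c<k. new_target_formula s t c0 (Inr ({a, y}, c)))
        = (\<Sum>c<k. ?G y - (if {a, y} = {s, t} \<and> c = c0 then ?G y else 0))"
      by (intro sum.cong) auto
    then show ?thesis using c0 by (simp add: sum_subtractf sum.delta')
  qed
  have G_sum: "(\<Sum>y\<in>nbrs a. ?G y)
      = real (degree V E a) + (real (degree V E a) * ?\<phi> a + (\<Sum>y\<in>nbrs a. ?\<phi> y)) / 2"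
    by (simp add: sum.distrib sum_divide_distrib[symmetric] degree_def)
  have "(\<Sum>y\<in>nbrs a. \<Sum>c<k. new_target_formula s t c0 (Inr ({a, y}, c)))
      = (\<Sum>y\<in>nbrs a. real k * ?G y - (if {a, y} = {s, t} then ?G y else 0))"
    by (rule sum.cong[OF refl copies])
  also have "\<dots> = real k * (\<Sum>y\<in>nbrs a. ?G y)
      - (if a \<in> {s, t} then 2 * real k * real (card (edges V E)) else 0)"
    by (simp only: sum_subtractf sum_distrib_left sum_nbrs_target_edge[OF st a])
  also have "\<dots> = real k * real (degree V E a) * (new_target_formula s t c0 (Inl a) - 1)"
    unfolding G_sum sum_nbrs_edge_potential[OF st a] by (simp add: field_simps)
  finally have "(\<Sum>y\<in>nbrs a. \<Sum>c<k. new_target_formula s t c0 (Inr ({a, y}, c)))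
      = real k * real (degree V E a) * (new_target_formula s t c0 (Inl a) - 1)" .
  moreover have "0 < degree V E a"
    using degree_pos[OF a s(1)] degree_pos[OF a s(2)] s(3) by blast
  ultimately show ?thesis
    using subdiv_first_step_Inl[OF a] by simp
qed

lemma hitting_time_subdiv_new_target:
  assumes st: "E s t" and c0: "c0 < k" and w: "w \<in> SV"
  shows "hitting_time SV SE w (Inr ({s, t}, c0)) = new_target_formula s t c0 w"
proof (rule walk_to_target.hitting_time_unique[OF subdiv_walk_to_target _ _ w])
  show "Inr ({s, t}, c0) \<in> SV" using st c0 by (auto simp: edges_iff)
  show "new_target_formula s t c0 (Inr ({s, t}, c0)) = 0" by simp
  fix x assume x: "x \<in> SV" "x \<noteq> Inr ({s, t}, c0)"
  show "new_target_formula s t c0 x = 1 + (\<Sum>w\<in>SV. trans_prob SV SE x w * new_target_formula s t c0 w)"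
  proof (cases x)
    case (Inl a)
    with x show ?thesis using new_target_formula_first_step_Inl[OF st c0] by auto
  next
    case (Inr p)
    with x obtain e c where "x = Inr (e, c)" "e \<in> edges V E" "c < k" "\<not> (e = {s, t} \<and> c = c0)"
      by (cases p) auto
    then show ?thesis by (auto simp: sum_trans_prob_subdiv_Inr)
  qed
qed

lemma hitting_time_subdiv_old_old:
  "i \<in> V \<Longrightarrow> j \<in> V \<Longrightarrow> hitting_time SV SE (Inl i) (Inl j) = 4 * H i j"
  using hitting_time_subdiv_old_target[of j "Inl i"] by simp

lemma hitting_time_subdiv_new_old:
  assumes "i \<in> subdiv_new V E k" "j \<in> V" "{w. SE i w} = {Inl s, Inl t}"
  shows "hitting_time SV SE i (Inl j) = 1 + 2 * H s j + 2 * H t j"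
proof -
  obtain c where "i = Inr ({s, t}, c)" "c < k" "E s t"
    using subdiv_new_nbrs[OF assms(1,3)] .
  then show ?thesis
    using hitting_time_subdiv_old_target[OF assms(2)] subdiv_new_subset_SV assms(1) edge_props
    by (auto simp: algebra_simps)
qed

lemma hitting_time_subdiv_old_new:
  assumes "i \<in> subdiv_new V E k" "j \<in> V" "{w. SE i w} = {Inl s, Inl t}"
  shows "hitting_time SV SE (Inl j) i =
    2 * real k * real (card (edges V E)) - 1 + 2 * (H j s + H j t) - (H t s + H s t)"
proof -
  obtain c where "i = Inr ({s, t}, c)" "c < k" "E s t"
    using subdiv_new_nbrs[OF assms(1,3)] .
  then show ?thesis
    using hitting_time_subdiv_new_target[of s t c "Inl j"] assms(2) by (simp add: edge_potential_def)
qed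

lemma hitting_time_subdiv_new_new:
  assumes "i \<in> subdiv_new V E k" "j \<in> subdiv_new V E k" "i \<noteq> j"
    and "{w. SE i w} = {Inl s, Inl t}" "{w. SE j w} = {Inl p, Inl q}"
  shows "hitting_time SV SE i j = 2 * real k * real (card (edges V E))
    + H s p + H s q + H t p + H t q - H q p - H p q"
proof -
  obtain c where i: "i = Inr ({s, t}, c)" "c < k" "E s t"
    using subdiv_new_nbrs[OF assms(1,4)] .
  obtain c' where j: "j = Inr ({p, q}, c')" "c' < k" "E p q"
    using subdiv_new_nbrs[OF assms(2,5)] .
  have "{s, t} \<in> edges V E" using i(3) by (auto simp: edges_iff)
  then have "hitting_time SV SE i j = 1 + (edge_potential p q s + edge_potential p q t) / 2"
    using hitting_time_subdiv_new_target[OF j(3) j(2), of i] i j assms(3) edge_props[OF i(3)]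
    by auto
  then show ?thesis by (simp add: edge_potential_def field_simps)
qed

end

theorem theorem4p2:
  fixes V :: "'a set" and E :: "'a \<Rightarrow> 'a \<Rightarrow> bool" and k :: nat
  assumes "simple_graph V E" and "connected_graph V E" and "k \<ge> 1"
  defines "m \<equiv> card (edges V E)"
      and "SV \<equiv> subdiv_V V E k" and "SE \<equiv> subdiv_E V E k" and "N \<equiv> subdiv_new V E k"
  shows
   "(\<forall>i\<in>V. \<forall>j\<in>V. i \<noteq> j \<longrightarrow>
       hitting_time SV SE (Inl i) (Inl j) = 4 * hitting_time V E i j)
  \<and> (\<forall>i\<in>N. \<forall>j\<in>V. \<forall>s t. {x. SE i x} = {Inl s, Inl t} \<longrightarrow>
       hitting_time SV SE i (Inl j) = 1 + 2 * hitting_time V E s j + 2 * hitting_time V E t j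
     \<and> hitting_time SV SE (Inl j) i =
         2 * real k * real m - 1 + 2 * (hitting_time V E j s + hitting_time V E j t)
         - (hitting_time V E t s + hitting_time V E s t))
  \<and> (\<forall>i\<in>N. \<forall>j\<in>N. \<forall>s t p q. i \<noteq> j \<longrightarrow>
       {x. SE i x} = {Inl s, Inl t} \<longrightarrow> {x. SE j x} = {Inl p, Inl q} \<longrightarrow>
       hitting_time SV SE i j =
         2 * real k * real m + hitting_time V E s p + hitting_time V E s q
         + hitting_time V E t p + hitting_time V E t q
         - hitting_time V E q p - hitting_time V E p q
     \<and> hitting_time SV SE j i =
         2 * real k * real m + hitting_time V E p s + hitting_time V E q s
         + hitting_time V E p t + hitting_time V E q t
         - hitting_time V E t s - hitting_time V E s t)"
proof -
  interpret S: parallel_subdivision V E k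
    using assms(1-3) by unfold_locales
  show ?thesis
    unfolding m_def SV_def SE_def N_def
    apply (intro conjI ballI allI impI)
    apply (rule S.hitting_time_subdiv_old_old; assumption)
    apply (rule S.hitting_time_subdiv_new_old; assumption)
    apply (rule S.hitting_time_subdiv_old_new; assumption)
    apply (rule S.hitting_time_subdiv_new_new; assumption)
    subgoal for i j s t p q
      using S.hitting_time_subdiv_new_new[of j i p q s t] by auto
    done
qed

end
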